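(* Let $z\colon\mathbf c^\circ\to\mathbf c^\bullet=\mu_k\mathbf c^\circ$ be a forward mutation at a vertex $k$ in $\mathrm{CEG}(\mathcal Q)$, and identify the vertex sets of $Q_{\mathbf c^\circ}$ and $Q_{\mathbf c^\bullet}$ (the vertex $k$ corresponding to the mutated object) as a common set $Q_0$. Let $t^\circ_l$ and $t^\bullet_l$ ($l\in Q_0$) be the local twists at $\mathbf c^\circ$ and $\mathbf c^\bullet$ respectively, and let $\mathrm{conj}_z\colon\pi_1(\mathrm{ceg}(\mathcal Q),\mathbf c^\circ)\to\pi_1(\mathrm{ceg}(\mathcal Q),\mathbf c^\bullet)$, $t\mapsto z^{-1}tz$. Then for every $l\in Q_0$, $$\mathrm{conj}_z(t^\circ_l)=\begin{cases}(t^\bullet_k)^{-1}\,t^\bullet_l\,t^\bullet_k & \text{if there are arrows from } l \text{ to } k \text{ in } Q_{\mathbf c^\circ},\\ t^\bullet_l&\text{otherwise.}\end{cases}$$ Consequently $\mathrm{conj}_z$ restricts to an isomorphism $\mathrm{CBr}(\mathbf c^\circ)\cong\mathrm{CBr}(\mathbf c^\bullet)$.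
   Context: Let $(Q,W)$ be a non-degenerate quiver with potential: $Q$ has no loops or oriented 2-cycles and every quiver with potential obtained from it by iterated Derksen–Weyman–Zelevinsky mutation again has none. Let $\Gamma=\Gamma(Q,W)$ be its Ginzburg dg algebra (degree 3, Jacobi-finite) and $\mathcal C(\Gamma)=\operatorname{per}\Gamma/D_{fd}(\Gamma)$ its cluster category. A cluster is a cluster tilting set in $\mathcal C(\Gamma)$; $Q_{\mathbf c}$ is the Gabriel quiver of $\operatorname{End}(\bigoplus_{M\in\mathbf c}M)$, with vertices the objects of $\mathbf c$; mutation of clusters induces quiver mutation. $\mathbf c_\Gamma$ is the canonical cluster, $\mathcal Q$ the mutation class of $(Q,W)$. $\underline{\mathrm{CEG}}(\mathcal Q)$: vertices the clusters reachable from $\mathbf c_\Gamma$ by mutation, edges mutations; $\mathrm{CEG}(\mathcal Q)$ replaces each edge $\mathbf c-\mu_i\mathbf c$ by oriented edges $\mathbf c\to\mu_i\mathbf c$ and $\mu_i\mathbf c\to\mathbf c$ (forward mutations). Paths compose left to right. The local twist $t_i$ at $\mathbf c$ is the loop $\mathbf c\to\mu_i\mathbf c\to\mathbf c$ of the two forward mutations of the edge $\mu_i$. The cluster exchange groupoid $\mathrm{ceg}(\mathcal Q)$ is the quotient of the path groupoid of $\mathrm{CEG}(\mathcal Q)$ by the following relations, imposed for every cluster $\mathbf c$ and ordered pair of distinct vertices $i,j$ of $Q_{\mathbf c}$ with no arrow from $i$ to $j$. Put $\mathbf c'=\mu_j\mathbf c$; in the path $\mu_i\mathbf c-\mathbf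 c-\mathbf c'-\mu_i\mathbf c'$ write $x$ for forward mutations in the direction $\mu_i\mathbf c\to\mathbf c\to\mathbf c'\to\mu_i\mathbf c'$ and $y$ for those in the opposite direction. (1) $x^2y=yx^2$ (morphisms $\mathbf c\to\mathbf c'$). (2) If also no arrow from $j$ to $i$, the clusters $\mathbf c,\mu_j\mathbf c,\mu_i\mu_j\mathbf c=\mu_j\mu_i\mathbf c,\mu_i\mathbf c$ form a 4-cycle; with $x$ labelling forward mutations around it in the direction starting $\mathbf c\to\mu_j\mathbf c$ and $y$ the other direction, impose $x^2=y^2$. (3) If exactly one arrow from $j$ to $i$, alternately mutating at $i,j$ gives a 5-cycle; with analogous labelling impose $x^2=y^3$. The cluster braid group $\mathrm{CBr}(\mathbf c)$ is the subgroup of $\pi_1(\mathrm{ceg}(\mathcal Q),\mathbf c)$ generated by the local twists $t_i$, $i$ a vertex of $Q_{\mathbf c}$. *)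

theory Defs
  imports "HOL-Algebra.Group" "HOL-Algebra.Generated_Groups"
begin

(* Abstract combinatorial model of the cluster exchange data of a non-degenerate
   quiver with potential.  Objects of the cluster category have type 'o; a cluster
   is a (finite) set of objects.
   mut c X  : the object replacing X when mutating the cluster c at X
   arr c X Y: number of arrows from X to Y in the Gabriel quiver Q_c
   cG       : the canonical cluster. *)

definition mu :: "('o set \<Rightarrow> 'o \<Rightarrow> 'o) \<Rightarrow> 'o set \<Rightarrow> 'o \<Rightarrow> 'o set" where
  "mu mut c X = insert (mut c X) (c - {X})"

(* clusters reachable from the canonical cluster: vertices of CEG *)
inductive_set reach :: "('o set \<Rightarrow> 'o \<Rightarrow> 'o) \<Rightarrow> 'o set \<Rightarrow> 'o set set"
  for mut cG where
  base: "cG \<in> reach mut cG"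
| step: "c \<in> reach mut cG \<Longrightarrow> X \<in> c \<Longrightarrow> mu mut c X \<in> reach mut cG"

definition bmat :: "('o set \<Rightarrow> 'o \<Rightarrow> 'o \<Rightarrow> nat) \<Rightarrow> 'o set \<Rightarrow> 'o \<Rightarrow> 'o \<Rightarrow> int" where
  "bmat arr c X Y = int (arr c X Y) - int (arr c Y X)"

(* Standing facts about clusters in C(Gamma) for non-degenerate (Q,W), stated for the
   reachable clusters: mutation replaces one object by a new one, is involutive,
   quivers have no loops / 2-cycles, mutation of clusters induces (Fomin-Zelevinsky)
   quiver mutation, and the squares / pentagons described in the definition of ceg close. *)
definition cluster_data ::
  "('o set \<Rightarrow> 'o \<Rightarrow> 'o) \<Rightarrow> ('o set \<Rightarrow> 'o \<Rightarrow> 'o \<Rightarrow> nat) \<Rightarrow> 'o set \<Rightarrow> bool" where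
  "cluster_data mut arr cG \<longleftrightarrow> finite cG \<and>
    (\<forall>c \<in> reach mut cG. \<forall>X \<in> c.
        mut c X \<notin> c \<and> mut (mu mut c X) (mut c X) = X) \<and>
    (\<forall>c \<in> reach mut cG. \<forall>X \<in> c. \<forall>Y \<in> c.
        arr c X X = 0 \<and> (arr c X Y = 0 \<or> arr c Y X = 0)) \<and>
    (\<forall>c \<in> reach mut cG. \<forall>k \<in> c. \<forall>Y \<in> c - {k}.
        arr (mu mut c k) (mut c k) Y = arr c Y k \<and>
        arr (mu mut c k) Y (mut c k) = arr c k Y \<and>
        (\<forall>Z \<in> c - {k}. int (arr (mu mut c k) Y Z) =
           max 0 (bmat arr c Y Z + max 0 (bmat arr c Y k) * max 0 (bmat arr c k Z)
                  - max 0 (bmat arr c k Y) * max 0 (bmat arr c Z k)))) \<and>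
    (\<forall>c \<in> reach mut cG. \<forall>i \<in> c. \<forall>j \<in> c. i \<noteq> j \<and> arr c i j = 0 \<and> arr c j i = 0 \<longrightarrow>
        mu mut (mu mut c j) i = mu mut (mu mut c i) j) \<and>
    (\<forall>c \<in> reach mut cG. \<forall>i \<in> c. \<forall>j \<in> c. i \<noteq> j \<and> arr c i j = 0 \<and> arr c j i = 1 \<longrightarrow>
        mu mut (mu mut (mu mut c i) j) (mut c i) = mu mut (mu mut c j) i)"

(* A forward mutation (oriented edge of CEG) is a pair (c, X): c -> mu c X.
   A letter of a word in the path groupoid is a forward mutation together with
   True (traversed forwards) or False (formal inverse). Paths compose left to right. *)
type_synonym 'o fmut = "'o set \<times> 'o"
type_synonym 'o letter = "'o fmut \<times> bool"

fun lsrc :: "('o set \<Rightarrow> 'o \<Rightarrow> 'o) \<Rightarrow> 'o letter \<Rightarrow> 'o set" where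
  "lsrc mut ((c, X), b) = (if b then c else mu mut c X)"

fun ltgt :: "('o set \<Rightarrow> 'o \<Rightarrow> 'o) \<Rightarrow> 'o letter \<Rightarrow> 'o set" where
  "ltgt mut ((c, X), b) = (if b then mu mut c X else c)"

definition fmuts :: "('o set \<Rightarrow> 'o \<Rightarrow> 'o) \<Rightarrow> 'o set \<Rightarrow> 'o fmut set" where
  "fmuts mut cG = {(c, X). c \<in> reach mut cG \<and> X \<in> c}"

fun walk :: "('o set \<Rightarrow> 'o \<Rightarrow> 'o) \<Rightarrow> 'o set \<Rightarrow> 'o set \<Rightarrow> 'o letter list \<Rightarrow> 'o set \<Rightarrow> bool" where
  "walk mut cG a [] b = (a = b)"
| "walk mut cG a (l # w) b =
     (fst l \<in> fmuts mut cG \<and> lsrc mut l = a \<and> walk mut cG (ltgt mut l) w b)"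

definition fw :: "'o fmut list \<Rightarrow> 'o letter list" where
  "fw es = map (\<lambda>e. (e, True)) es"

fun flip :: "'o letter \<Rightarrow> 'o letter" where
  "flip (e, b) = (e, \<not> b)"

definition inv_word :: "'o letter list \<Rightarrow> 'o letter list" where
  "inv_word w = rev (map flip w)"

(* the defining relations (1),(2),(3) of ceg *)
definition ceg_rels ::
  "('o set \<Rightarrow> 'o \<Rightarrow> 'o) \<Rightarrow> ('o set \<Rightarrow> 'o \<Rightarrow> 'o \<Rightarrow> nat) \<Rightarrow> 'o set
     \<Rightarrow> ('o letter list \<times> 'o letter list) set" where
  "ceg_rels mut arr cG =
     {(fw [(c, i), (mu mut c i, mut c i), (c, j)],
       fw [(c, j), (mu mut c j, i), (mu mut (mu mut c j) i, mut (mu mut c j) i)]) | c i j.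
        c \<in> reach mut cG \<and> i \<in> c \<and> j \<in> c \<and> i \<noteq> j \<and> arr c i j = 0}
   \<union> {(fw [(c, j), (mu mut c j, i)], fw [(c, i), (mu mut c i, j)]) | c i j.
        c \<in> reach mut cG \<and> i \<in> c \<and> j \<in> c \<and> i \<noteq> j \<and> arr c i j = 0 \<and> arr c j i = 0}
   \<union> {(fw [(c, j), (mu mut c j, i)],
        fw [(c, i), (mu mut c i, j), (mu mut (mu mut c i) j, mut c i)]) | c i j.
        c \<in> reach mut cG \<and> i \<in> c \<and> j \<in> c \<and> i \<noteq> j \<and> arr c i j = 0 \<and> arr c j i = 1}"

inductive ceg_eq ::
  "('o set \<Rightarrow> 'o \<Rightarrow> 'o) \<Rightarrow> ('o set \<Rightarrow> 'o \<Rightarrow> 'o \<Rightarrow> nat) \<Rightarrow> 'o set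
     \<Rightarrow> 'o letter list \<Rightarrow> 'o letter list \<Rightarrow> bool"
  for mut arr cG where
  refl: "ceg_eq mut arr cG w w"
| sym: "ceg_eq mut arr cG u v \<Longrightarrow> ceg_eq mut arr cG v u"
| trans: "ceg_eq mut arr cG u v \<Longrightarrow> ceg_eq mut arr cG v w \<Longrightarrow> ceg_eq mut arr cG u w"
| cancel: "ceg_eq mut arr cG (u @ [l, flip l] @ v) (u @ v)"
| rel: "(p, q) \<in> ceg_rels mut arr cG \<Longrightarrow> ceg_eq mut arr cG (u @ p @ v) (u @ q @ v)"

definition ceg_class ::
  "('o set \<Rightarrow> 'o \<Rightarrow> 'o) \<Rightarrow> ('o set \<Rightarrow> 'o \<Rightarrow> 'o \<Rightarrow> nat) \<Rightarrow> 'o set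
     \<Rightarrow> 'o letter list \<Rightarrow> 'o letter list set" where
  "ceg_class mut arr cG w = {v. ceg_eq mut arr cG w v}"

definition pi1 ::
  "('o set \<Rightarrow> 'o \<Rightarrow> 'o) \<Rightarrow> ('o set \<Rightarrow> 'o \<Rightarrow> 'o \<Rightarrow> nat) \<Rightarrow> 'o set \<Rightarrow> 'o set
     \<Rightarrow> 'o letter list set monoid" where
  "pi1 mut arr cG c =
     \<lparr> carrier = {ceg_class mut arr cG w | w. walk mut cG c w c},
       mult = (\<lambda>A B. ceg_class mut arr cG ((SOME u. u \<in> A) @ (SOME v. v \<in> B))),
       one = ceg_class mut arr cG [] \<rparr>"

definition twist :: "('o set \<Rightarrow> 'o \<Rightarrow> 'o) \<Rightarrow> 'o set \<Rightarrow> 'o \<Rightarrow> 'o letter list" where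
  "twist mut c X = fw [(c, X), (mu mut c X, mut c X)]"

definition CBr ::
  "('o set \<Rightarrow> 'o \<Rightarrow> 'o) \<Rightarrow> ('o set \<Rightarrow> 'o \<Rightarrow> 'o \<Rightarrow> nat) \<Rightarrow> 'o set \<Rightarrow> 'o set
     \<Rightarrow> 'o letter list set set" where
  "CBr mut arr cG c =
     generate (pi1 mut arr cG c) {ceg_class mut arr cG (twist mut c X) | X. X \<in> c}"

definition conjz ::
  "('o set \<Rightarrow> 'o \<Rightarrow> 'o) \<Rightarrow> ('o set \<Rightarrow> 'o \<Rightarrow> 'o \<Rightarrow> nat) \<Rightarrow> 'o set \<Rightarrow> 'o fmut
     \<Rightarrow> 'o letter list set \<Rightarrow> 'o letter list set" where
  "conjz mut arr cG z A = ceg_class mut arr cG ([(z, False)] @ (SOME w. w \<in> A) @ [(z, True)])"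

end

theory Submission
  imports Defs
begin

text \<open>
  Conjugating by the forward mutation \<open>z = (c, k)\<close> sends the twist \<open>t\<^sub>k\<close> to \<open>t\<^sub>k'\<close>
  by free cancellation alone. For \<open>l \<noteq> k\<close> without arrows \<open>l \<rightarrow> k\<close>, relation (1) at
  \<open>c\<close> slides \<open>t\<^sub>l\<close> past \<open>z\<close>. If there are arrows \<open>l \<rightarrow> k\<close>, there are none \<open>k \<rightarrow> l\<close>,
  hence none \<open>l \<rightarrow> k'\<close> in the mutated quiver, and relation (1) at \<open>\<mu>\<^sub>k c\<close> with
  the roles of the two vertices exchanged gives the conjugated formula. Conjugation by
  an edge is an isomorphism of fundamental groups, and the twist formulas show that the
  images of the generators of \<open>CBr(c)\<close> and the generators of \<open>CBr(\<mu>\<^sub>k c)\<close> generate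
  each other.
\<close>

definition twists ::
  "('o set \<Rightarrow> 'o \<Rightarrow> 'o) \<Rightarrow> ('o set \<Rightarrow> 'o \<Rightarrow> 'o \<Rightarrow> nat) \<Rightarrow> 'o set \<Rightarrow> 'o set
     \<Rightarrow> 'o letter list set set" where
  "twists mut arr cG c = {ceg_class mut arr cG (twist mut c X) | X. X \<in> c}"

lemma (in group) generate_eq_generate:
  assumes "A \<subseteq> carrier G" "B \<subseteq> carrier G" "A \<subseteq> generate G B" "B \<subseteq> generate G A"
  shows "generate G A = generate G B"
  using assms generate_subgroup_incl generate_is_subgroup by (metis subset_antisym)

lemma (in group) mem_generate_of_conj:
  assumes "S \<subseteq> carrier G" "y \<in> carrier G"
    and "T \<in> generate G S" "inv T \<otimes> y \<otimes> T \<in> generate G S"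
  shows "y \<in> generate G S"
proof -
  interpret H: subgroup "generate G S" G by (rule generate_is_subgroup[OF assms(1)])
  have T: "T \<in> carrier G" using assms(3) H.subset by blast
  have "y = T \<otimes> (inv T \<otimes> y \<otimes> T) \<otimes> inv T"
    using T assms(2) by (simp add: m_assoc) (simp flip: m_assoc)
  then show ?thesis using assms(3,4) by (metis H.m_closed H.m_inv_closed)
qed

context
  fixes mut :: "'o set \<Rightarrow> 'o \<Rightarrow> 'o" and arr :: "'o set \<Rightarrow> 'o \<Rightarrow> 'o \<Rightarrow> nat" and cG :: "'o set"
begin

lemmas [trans] = ceg_eq.trans

lemma ceg_eq_context:
  "ceg_eq mut arr cG x y \<Longrightarrow> ceg_eq mut arr cG (a @ x @ b) (a @ y @ b)"
proof (induction rule: ceg_eq.induct)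
  case (refl w) then show ?case by (rule ceg_eq.refl)
next
  case (sym u v) then show ?case by (blast intro: ceg_eq.sym)
next
  case (trans u v w) then show ?case by (blast intro: ceg_eq.trans)
next
  case (cancel u l v) then show ?case using ceg_eq.cancel[of mut arr cG "a @ u" l "v @ b"] by simp
next
  case (rel p q u v) then show ?case using ceg_eq.rel[of p q mut arr cG "a @ u" "v @ b"] by simp
qed

lemma ceg_eq_append:
  assumes "ceg_eq mut arr cG x y" "ceg_eq mut arr cG x' y'"
  shows "ceg_eq mut arr cG (x @ x') (y @ y')"
  using ceg_eq_context[OF assms(1), of "[]" x'] ceg_eq_context[OF assms(2), of y "[]"]
  by (auto intro: ceg_eq.trans)

lemma ceg_eq_cancel_ends: "ceg_eq mut arr cG (x # flip x # u @ [y, flip y]) u"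
  using ceg_eq.cancel[of mut arr cG "[]" x "u @ [y, flip y]"] ceg_eq.cancel[of mut arr cG u y "[]"]
  by (auto intro: ceg_eq.trans)

lemma ceg_class_eq_iff:
  "ceg_class mut arr cG w = ceg_class mut arr cG v \<longleftrightarrow> ceg_eq mut arr cG w v"
  unfolding ceg_class_def by (blast intro: ceg_eq.refl ceg_eq.sym ceg_eq.trans)

lemma ceg_eq_some_class: "ceg_eq mut arr cG w (SOME u. u \<in> ceg_class mut arr cG w)"
  using someI[of "\<lambda>u. u \<in> ceg_class mut arr cG w" w] by (simp add: ceg_class_def ceg_eq.refl)

lemma conjz_class:
  "conjz mut arr cG z (ceg_class mut arr cG w) = ceg_class mut arr cG ([(z, False)] @ w @ [(z, True)])"
  unfolding conjz_def ceg_class_eq_iff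
  by (rule ceg_eq_context, rule ceg_eq.sym, rule ceg_eq_some_class)

lemma pi1_mult_class:
  "ceg_class mut arr cG a \<otimes>\<^bsub>pi1 mut arr cG c\<^esub> ceg_class mut arr cG b = ceg_class mut arr cG (a @ b)"
  unfolding pi1_def by (simp add: ceg_class_eq_iff ceg_eq_append ceg_eq.sym ceg_eq_some_class)

lemma pi1_one: "\<one>\<^bsub>pi1 mut arr cG c\<^esub> = ceg_class mut arr cG []"
  by (simp add: pi1_def)

lemma pi1_carrier_iff:
  "x \<in> carrier (pi1 mut arr cG c) \<longleftrightarrow> (\<exists>w. x = ceg_class mut arr cG w \<and> walk mut cG c w c)"
  by (auto simp add: pi1_def)

lemma flip_flip [simp]: "flip (flip x) = x"
  by (cases x) simp

lemma lsrc_flip [simp]: "lsrc mut (flip l) = ltgt mut l"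
  by (cases l) auto

lemma ltgt_flip [simp]: "ltgt mut (flip l) = lsrc mut l"
  by (cases l) auto

lemma fst_flip [simp]: "fst (flip l) = fst l"
  by (cases l) auto

lemma inv_word_Nil [simp]: "inv_word [] = []"
  by (simp add: inv_word_def)

lemma inv_word_Cons [simp]: "inv_word (x # w) = inv_word w @ [flip x]"
  by (simp add: inv_word_def)

lemma ceg_eq_inv_word_right: "ceg_eq mut arr cG (w @ inv_word w) []"
proof (induction w)
  case Nil then show ?case by (simp add: ceg_eq.refl)
next
  case (Cons x w)
  have "ceg_eq mut arr cG ([x] @ (w @ inv_word w) @ [flip x]) ([x] @ [] @ [flip x])"
    by (rule ceg_eq_context[OF Cons])
  moreover have "ceg_eq mut arr cG ([] @ [x, flip x] @ []) []"
    using ceg_eq.cancel[of mut arr cG "[]" x "[]"] by simp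
  ultimately show ?case by (auto intro: ceg_eq.trans)
qed

lemma ceg_eq_inv_word_left: "ceg_eq mut arr cG (inv_word w @ w) []"
  using ceg_eq_inv_word_right[of "inv_word w"] by (simp add: inv_word_def rev_map comp_def)

lemma walk_append: "walk mut cG a (u @ v) b \<longleftrightarrow> (\<exists>m. walk mut cG a u m \<and> walk mut cG m v b)"
  by (induction u arbitrary: a) auto

lemma walk_inv_word: "walk mut cG a w b \<Longrightarrow> walk mut cG b (inv_word w) a"
  by (induction w arbitrary: a) (auto simp: walk_append)

lemma group_pi1: "group (pi1 mut arr cG c)"
proof (rule groupI)
  fix x y assume "x \<in> carrier (pi1 mut arr cG c)" "y \<in> carrier (pi1 mut arr cG c)"
  then obtain u v where "x = ceg_class mut arr cG u" "walk mut cG c u c"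
      "y = ceg_class mut arr cG v" "walk mut cG c v c"
    by (auto simp: pi1_carrier_iff)
  then show "x \<otimes>\<^bsub>pi1 mut arr cG c\<^esub> y \<in> carrier (pi1 mut arr cG c)"
    by (auto simp: pi1_mult_class pi1_carrier_iff walk_append intro!: exI[of _ "u @ v"])
next
  show "\<one>\<^bsub>pi1 mut arr cG c\<^esub> \<in> carrier (pi1 mut arr cG c)"
    by (auto simp: pi1_one pi1_carrier_iff)
next
  fix x y z
  assume "x \<in> carrier (pi1 mut arr cG c)" "y \<in> carrier (pi1 mut arr cG c)"
    "z \<in> carrier (pi1 mut arr cG c)"
  then show "x \<otimes>\<^bsub>pi1 mut arr cG c\<^esub> y \<otimes>\<^bsub>pi1 mut arr cG c\<^esub> z =
      x \<otimes>\<^bsub>pi1 mut arr cG c\<^esub> (y \<otimes>\<^bsub>pi1 mut arr cG c\<^esub> z)"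
    by (auto simp: pi1_mult_class pi1_carrier_iff)
next
  fix x assume "x \<in> carrier (pi1 mut arr cG c)"
  then show "\<one>\<^bsub>pi1 mut arr cG c\<^esub> \<otimes>\<^bsub>pi1 mut arr cG c\<^esub> x = x"
    by (auto simp: pi1_mult_class pi1_carrier_iff pi1_one)
next
  fix x assume "x \<in> carrier (pi1 mut arr cG c)"
  then obtain u where u: "x = ceg_class mut arr cG u" "walk mut cG c u c"
    by (auto simp: pi1_carrier_iff)
  then have "ceg_class mut arr cG (inv_word u) \<in> carrier (pi1 mut arr cG c)"
    by (auto simp: pi1_carrier_iff walk_inv_word)
  moreover have "ceg_class mut arr cG (inv_word u) \<otimes>\<^bsub>pi1 mut arr cG c\<^esub> x = \<one>\<^bsub>pi1 mut arr cG c\<^esub>"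
    using u by (simp add: pi1_mult_class pi1_one ceg_class_eq_iff ceg_eq_inv_word_left)
  ultimately show "\<exists>y\<in>carrier (pi1 mut arr cG c). y \<otimes>\<^bsub>pi1 mut arr cG c\<^esub> x = \<one>\<^bsub>pi1 mut arr cG c\<^esub>"
    by blast
qed

lemma pi1_inv_class:
  assumes "walk mut cG c u c"
  shows "inv\<^bsub>pi1 mut arr cG c\<^esub> (ceg_class mut arr cG u) = ceg_class mut arr cG (inv_word u)"
proof (rule group.inv_equality[OF group_pi1])
  show "ceg_class mut arr cG (inv_word u) \<otimes>\<^bsub>pi1 mut arr cG c\<^esub> ceg_class mut arr cG u
      = \<one>\<^bsub>pi1 mut arr cG c\<^esub>"
    by (simp add: pi1_mult_class pi1_one ceg_class_eq_iff ceg_eq_inv_word_left)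
  show "ceg_class mut arr cG u \<in> carrier (pi1 mut arr cG c)"
    using assms by (auto simp: pi1_carrier_iff)
  show "ceg_class mut arr cG (inv_word u) \<in> carrier (pi1 mut arr cG c)"
    using walk_inv_word[OF assms] by (auto simp: pi1_carrier_iff)
qed

lemma conjz_hom:
  assumes "c \<in> reach mut cG" "X \<in> c"
  shows "conjz mut arr cG (c, X) \<in> hom (pi1 mut arr cG c) (pi1 mut arr cG (mu mut c X))"
proof (rule homI)
  fix x assume "x \<in> carrier (pi1 mut arr cG c)"
  then show "conjz mut arr cG (c, X) x \<in> carrier (pi1 mut arr cG (mu mut c X))"
    using assms by (auto simp: pi1_carrier_iff conjz_class walk_append fmuts_def)
next
  let ?zp = "((c, X), True)" and ?zm = "((c, X), False)"
  fix x y assume "x \<in> carrier (pi1 mut arr cG c)" "y \<in> carrier (pi1 mut arr cG c)"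
  then obtain u v where "x = ceg_class mut arr cG u" "y = ceg_class mut arr cG v"
    by (auto simp: pi1_carrier_iff)
  moreover have "ceg_eq mut arr cG ([?zm] @ (u @ v) @ [?zp]) ([?zm] @ u @ [?zp] @ [?zm] @ v @ [?zp])"
    using ceg_eq.sym[OF ceg_eq.cancel[of mut arr cG "[?zm] @ u" ?zp "v @ [?zp]"]] by simp
  ultimately show "conjz mut arr cG (c, X) (x \<otimes>\<^bsub>pi1 mut arr cG c\<^esub> y) =
      conjz mut arr cG (c, X) x \<otimes>\<^bsub>pi1 mut arr cG (mu mut c X)\<^esub> conjz mut arr cG (c, X) y"
    by (simp add: pi1_mult_class conjz_class ceg_class_eq_iff)
qed

lemma conjz_iso:
  assumes "c \<in> reach mut cG" "X \<in> c"
  shows "conjz mut arr cG (c, X) \<in> iso (pi1 mut arr cG c) (pi1 mut arr cG (mu mut c X))"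
proof -
  let ?f = "conjz mut arr cG (c, X)" and ?zp = "((c, X), True)" and ?zm = "((c, X), False)"
  have inj: "inj_on ?f (carrier (pi1 mut arr cG c))"
  proof (rule inj_onI)
    fix x y assume "x \<in> carrier (pi1 mut arr cG c)" "y \<in> carrier (pi1 mut arr cG c)" "?f x = ?f y"
    then obtain u v where uv: "x = ceg_class mut arr cG u" "y = ceg_class mut arr cG v"
      by (auto simp: pi1_carrier_iff)
    with \<open>?f x = ?f y\<close> have "ceg_eq mut arr cG ([?zm] @ u @ [?zp]) ([?zm] @ v @ [?zp])"
      by (simp add: conjz_class ceg_class_eq_iff)
    have "ceg_eq mut arr cG u (?zp # flip ?zp # u @ [?zp, flip ?zp])"
      by (rule ceg_eq.sym[OF ceg_eq_cancel_ends])
    also have "ceg_eq mut arr cG \<dots> (?zp # flip ?zp # v @ [?zp, flip ?zp])"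
      using ceg_eq_context[OF \<open>ceg_eq mut arr cG ([?zm] @ u @ [?zp]) ([?zm] @ v @ [?zp])\<close>, of "[?zp]" "[?zm]"]
      by simp
    also have "ceg_eq mut arr cG \<dots> v"
      by (rule ceg_eq_cancel_ends)
    finally show "x = y" by (simp add: uv ceg_class_eq_iff)
  qed
  have "carrier (pi1 mut arr cG (mu mut c X)) \<subseteq> ?f ` carrier (pi1 mut arr cG c)"
  proof
    fix y assume "y \<in> carrier (pi1 mut arr cG (mu mut c X))"
    then obtain v where v: "y = ceg_class mut arr cG v" "walk mut cG (mu mut c X) v (mu mut c X)"
      by (auto simp: pi1_carrier_iff)
    then have "ceg_class mut arr cG ([?zp] @ v @ [?zm]) \<in> carrier (pi1 mut arr cG c)"
      using assms by (auto simp: pi1_carrier_iff walk_append fmuts_def)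
    moreover have "?f (ceg_class mut arr cG ([?zp] @ v @ [?zm])) = y"
      using ceg_eq_cancel_ends[of ?zm v ?zm] by (simp add: conjz_class v ceg_class_eq_iff)
    ultimately show "y \<in> ?f ` carrier (pi1 mut arr cG c)" by (metis image_eqI)
  qed
  with inj conjz_hom[OF assms] show ?thesis
    by (auto simp: iso_def bij_betw_def dest: hom_carrier)
qed

end

context
  fixes mut :: "'o set \<Rightarrow> 'o \<Rightarrow> 'o" and arr :: "'o set \<Rightarrow> 'o \<Rightarrow> 'o \<Rightarrow> nat" and cG :: "'o set"
  assumes cd: "cluster_data mut arr cG"
begin

lemma mut_notin: "c \<in> reach mut cG \<Longrightarrow> X \<in> c \<Longrightarrow> mut c X \<notin> c"
  using cd by (simp add: cluster_data_def)

lemma mut_mut: "c \<in> reach mut cG \<Longrightarrow> X \<in> c \<Longrightarrow> mut (mu mut c X) (mut c X) = X"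
  using cd by (simp add: cluster_data_def)

lemma mu_mu: "c \<in> reach mut cG \<Longrightarrow> X \<in> c \<Longrightarrow> mu mut (mu mut c X) (mut c X) = c"
  using mut_mut[of c X] mut_notin[of c X] by (auto simp: mu_def)

lemma quiver_no_loops_no_2cycles:
  "\<forall>c \<in> reach mut cG. \<forall>X \<in> c. \<forall>Y \<in> c. arr c X X = 0 \<and> (arr c X Y = 0 \<or> arr c Y X = 0)"
  using cd unfolding cluster_data_def by (elim conjE)

lemma arr_loop:
  assumes "c \<in> reach mut cG" "X \<in> c" shows "arr c X X = 0"
  using quiver_no_loops_no_2cycles[rule_format, OF assms assms(2)] by (elim conjE)

lemma arr_no_2cycle:
  assumes "c \<in> reach mut cG" "X \<in> c" "Y \<in> c" shows "arr c X Y = 0 \<or> arr c Y X = 0"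
  using quiver_no_loops_no_2cycles[rule_format, OF assms] by (elim conjE)

lemma arr_mu_to_mut:
  assumes "c \<in> reach mut cG" "k \<in> c" "Y \<in> c" "Y \<noteq> k"
  shows "arr (mu mut c k) Y (mut c k) = arr c k Y"
proof -
  have "\<forall>c \<in> reach mut cG. \<forall>k \<in> c. \<forall>Y \<in> c - {k}.
        arr (mu mut c k) (mut c k) Y = arr c Y k \<and>
        arr (mu mut c k) Y (mut c k) = arr c k Y \<and>
        (\<forall>Z \<in> c - {k}. int (arr (mu mut c k) Y Z) =
           max 0 (bmat arr c Y Z + max 0 (bmat arr c Y k) * max 0 (bmat arr c k Z)
                  - max 0 (bmat arr c k Y) * max 0 (bmat arr c Z k)))"
    using cd unfolding cluster_data_def by (elim conjE)
  then show ?thesis using assms by simp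
qed

lemma walk_twist: "c \<in> reach mut cG \<Longrightarrow> X \<in> c \<Longrightarrow> walk mut cG c (twist mut c X) c"
  using mu_mu[of c X] reach.step[of c mut cG X]
  by (auto simp: twist_def fw_def fmuts_def mu_def)

lemma twist_mu_mut:
  assumes "c \<in> reach mut cG" "X \<in> c"
  shows "twist mut (mu mut c X) (mut c X) = [((mu mut c X, mut c X), True), ((c, X), True)]"
  using mu_mu[OF assms] mut_mut[OF assms] by (simp add: twist_def fw_def)

lemma ceg_eq_relation_1:
  assumes "c \<in> reach mut cG" "i \<in> c" "j \<in> c" "i \<noteq> j" "arr c i j = 0"
  shows "ceg_eq mut arr cG (u @ fw [(c, i), (mu mut c i, mut c i), (c, j)] @ v)
     (u @ fw [(c, j), (mu mut c j, i), (mu mut (mu mut c j) i, mut (mu mut c j) i)] @ v)"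
proof (rule ceg_eq.rel)
  show "(fw [(c, i), (mu mut c i, mut c i), (c, j)],
      fw [(c, j), (mu mut c j, i), (mu mut (mu mut c j) i, mut (mu mut c j) i)]) \<in> ceg_rels mut arr cG"
    unfolding ceg_rels_def using assms by blast
qed

lemma conj_twist_self:
  assumes "c \<in> reach mut cG" "k \<in> c"
  shows "ceg_eq mut arr cG ([((c, k), False)] @ twist mut c k @ [((c, k), True)])
    (twist mut (mu mut c k) (mut c k))"
  using ceg_eq.cancel[of mut arr cG "[]" "((c, k), False)"]
  by (simp only: twist_mu_mut[OF assms]) (simp add: twist_def fw_def)

lemma conj_twist_commute:
  assumes "c \<in> reach mut cG" "k \<in> c" "l \<in> c" "l \<noteq> k" "arr c l k = 0"
  shows "ceg_eq mut arr cG ([((c, k), False)] @ twist mut c l @ [((c, k), True)])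
    (twist mut (mu mut c k) l)"
proof -
  have "ceg_eq mut arr cG ([((c, k), False)] @ twist mut c l @ [((c, k), True)])
      ([((c, k), False)] @ fw [(c, k), (mu mut c k, l), (mu mut (mu mut c k) l, mut (mu mut c k) l)] @ [])"
    using ceg_eq_relation_1[OF assms(1,3,2,4,5), of "[((c, k), False)]" "[]"]
    by (simp add: twist_def fw_def)
  also have "\<dots> = [] @ [((c, k), False), flip ((c, k), False)] @ twist mut (mu mut c k) l"
    by (simp add: twist_def fw_def)
  also have "ceg_eq mut arr cG \<dots> (twist mut (mu mut c k) l)"
    using ceg_eq.cancel[of mut arr cG "[]" "((c, k), False)" "twist mut (mu mut c k) l"] by simp
  finally show ?thesis .
qed

lemma conj_twist_arrow:
  assumes "c \<in> reach mut cG" "k \<in> c" "l \<in> c" "l \<noteq> k" "arr c l k > 0"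
  shows "ceg_eq mut arr cG ([((c, k), False)] @ twist mut c l @ [((c, k), True)])
    (inv_word (twist mut (mu mut c k) (mut c k)) @ twist mut (mu mut c k) l
      @ twist mut (mu mut c k) (mut c k))"
proof -
  let ?c1 = "mu mut c k" and ?k' = "mut c k"
  have r1: "?c1 \<in> reach mut cG" using assms(1,2) by (rule reach.step)
  have "arr c k l = 0" using arr_no_2cycle[OF assms(1,2,3)] assms(5) by simp
  then have "arr ?c1 l ?k' = 0" using arr_mu_to_mut[OF assms(1-4)] by simp
  moreover have "l \<in> ?c1" "?k' \<in> ?c1" "l \<noteq> ?k'"
    using assms(3,4) mut_notin[OF assms(1,2)] by (auto simp: mu_def)
  ultimately have "ceg_eq mut arr cG
      ([((c, k), False), ((?c1, ?k'), False)]
        @ fw [(?c1, l), (mu mut ?c1 l, mut ?c1 l), (?c1, ?k')] @ [((c, k), True)])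
      ([((c, k), False), ((?c1, ?k'), False)]
        @ fw [(?c1, ?k'), (mu mut ?c1 ?k', l), (mu mut (mu mut ?c1 ?k') l, mut (mu mut ?c1 ?k') l)]
        @ [((c, k), True)])"
    using r1 by (intro ceg_eq_relation_1)
  also have "\<dots> = [((c, k), False)] @ [((?c1, ?k'), False), flip ((?c1, ?k'), False)]
      @ (twist mut c l @ [((c, k), True)])"
    by (simp add: mu_mu[OF assms(1,2)] mut_mut[OF assms(1,2)] twist_def fw_def)
  also have "ceg_eq mut arr cG \<dots> ([((c, k), False)] @ twist mut c l @ [((c, k), True)])"
    by (rule ceg_eq.cancel)
  finally have "ceg_eq mut arr cG
      (inv_word (twist mut ?c1 ?k') @ twist mut ?c1 l @ twist mut ?c1 ?k')
      ([((c, k), False)] @ twist mut c l @ [((c, k), True)])"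
    by (simp add: mu_mu[OF assms(1,2)] mut_mut[OF assms(1,2)] twist_def fw_def)
  then show ?thesis by (rule ceg_eq.sym)
qed

lemma conj_twist:
  assumes "c \<in> reach mut cG" "k \<in> c" "l \<in> c"
  shows "ceg_eq mut arr cG ([((c, k), False)] @ twist mut c l @ [((c, k), True)])
    (if arr c l k > 0
     then inv_word (twist mut (mu mut c k) (mut c k))
       @ twist mut (mu mut c k) (if l = k then mut c k else l) @ twist mut (mu mut c k) (mut c k)
     else twist mut (mu mut c k) (if l = k then mut c k else l))"
proof (cases "l = k")
  case True
  then show ?thesis using conj_twist_self[OF assms(1,2)] arr_loop[OF assms(1,2)] by simp
next
  case False
  then show ?thesis using conj_twist_commute[OF assms False] conj_twist_arrow[OF assms False] by simp
qed

lemma twists_subset_carrier: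
  assumes "c \<in> reach mut cG"
  shows "twists mut arr cG c \<subseteq> carrier (pi1 mut arr cG c)"
  using walk_twist[OF assms] by (force simp: twists_def pi1_carrier_iff)

lemma conjz_twist_class:
  assumes "c \<in> reach mut cG" "k \<in> c" "l \<in> c"
  defines "G1 \<equiv> pi1 mut arr cG (mu mut c k)"
    and "T \<equiv> ceg_class mut arr cG (twist mut (mu mut c k) (mut c k))"
  shows "conjz mut arr cG (c, k) (ceg_class mut arr cG (twist mut c l)) =
    (if arr c l k > 0
     then inv\<^bsub>G1\<^esub> T \<otimes>\<^bsub>G1\<^esub> ceg_class mut arr cG (twist mut (mu mut c k) (if l = k then mut c k else l))
       \<otimes>\<^bsub>G1\<^esub> T
     else ceg_class mut arr cG (twist mut (mu mut c k) (if l = k then mut c k else l)))"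
proof -
  have "walk mut cG (mu mut c k) (twist mut (mu mut c k) (mut c k)) (mu mut c k)"
    using assms(1,2) by (intro walk_twist reach.step) (auto simp: mu_def)
  then show ?thesis
    using conj_twist[OF assms(1-3)]
    by (cases "arr c l k > 0")
      (simp_all add: G1_def T_def conjz_class ceg_class_eq_iff pi1_inv_class pi1_mult_class)
qed

lemma conjz_twists_subset_generate:
  assumes "c \<in> reach mut cG" "k \<in> c"
  shows "conjz mut arr cG (c, k) ` twists mut arr cG c
    \<subseteq> generate (pi1 mut arr cG (mu mut c k)) (twists mut arr cG (mu mut c k))"
proof
  let ?t1 = "\<lambda>X. ceg_class mut arr cG (twist mut (mu mut c k) X)"
  fix y assume "y \<in> conjz mut arr cG (c, k) ` twists mut arr cG c"
  then obtain l where "l \<in> c" and y: "y = conjz mut arr cG (c, k) (ceg_class mut arr cG (twist mut c l))"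
    by (auto simp: twists_def)
  have "?t1 (if l = k then mut c k else l) \<in> twists mut arr cG (mu mut c k)"
    and "?t1 (mut c k) \<in> twists mut arr cG (mu mut c k)"
    using \<open>l \<in> c\<close> by (auto simp: twists_def mu_def)
  then show "y \<in> generate (pi1 mut arr cG (mu mut c k)) (twists mut arr cG (mu mut c k))"
    unfolding y conjz_twist_class[OF assms \<open>l \<in> c\<close>]
    by (simp add: generate.incl generate.inv generate.eng)
qed

lemma twists_subset_generate_conjz:
  assumes c: "c \<in> reach mut cG" and k: "k \<in> c"
  shows "twists mut arr cG (mu mut c k)
    \<subseteq> generate (pi1 mut arr cG (mu mut c k)) (conjz mut arr cG (c, k) ` twists mut arr cG c)"
proof
  let ?G1 = "pi1 mut arr cG (mu mut c k)" and ?f = "conjz mut arr cG (c, k)"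
  let ?gen = "generate ?G1 (?f ` twists mut arr cG c)"
  let ?T = "ceg_class mut arr cG (twist mut (mu mut c k) (mut c k))"
  interpret G1: group ?G1 by (rule group_pi1)
  have r1: "mu mut c k \<in> reach mut cG" using c k by (rule reach.step)
  have f_twists: "?f ` twists mut arr cG c \<subseteq> carrier ?G1"
    using twists_subset_carrier[OF c] hom_carrier[OF conjz_hom[OF c k]] by blast
  have gen_f: "?f (ceg_class mut arr cG (twist mut c l)) \<in> ?gen" if "l \<in> c" for l
    using that by (auto simp: twists_def intro: generate.incl)
  have "?T \<in> ?gen"
    using gen_f[OF k] by (simp add: conjz_twist_class[OF c k k] arr_loop[OF c k])
  fix y assume "y \<in> twists mut arr cG (mu mut c k)"
  then obtain X where X: "X \<in> mu mut c k" "y = ceg_class mut arr cG (twist mut (mu mut c k) X)"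
    by (auto simp: twists_def)
  show "y \<in> ?gen"
  proof (cases "X = mut c k")
    case True
    then show ?thesis using X(2) \<open>?T \<in> ?gen\<close> by simp
  next
    case False
    then have "X \<in> c" "X \<noteq> k" using X(1) by (auto simp: mu_def)
    then have "?f (ceg_class mut arr cG (twist mut c X)) =
        (if arr c X k > 0 then inv\<^bsub>?G1\<^esub> ?T \<otimes>\<^bsub>?G1\<^esub> y \<otimes>\<^bsub>?G1\<^esub> ?T else y)"
      by (simp add: conjz_twist_class[OF c k \<open>X \<in> c\<close>] X(2))
    with gen_f[OF \<open>X \<in> c\<close>]
    have image: "(if arr c X k > 0 then inv\<^bsub>?G1\<^esub> ?T \<otimes>\<^bsub>?G1\<^esub> y \<otimes>\<^bsub>?G1\<^esub> ?T else y) \<in> ?gen"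
      by metis
    have "y \<in> carrier ?G1"
      using X twists_subset_carrier[OF r1] by (auto simp: twists_def)
    show ?thesis
    proof (cases "arr c X k > 0")
      case True
      then show ?thesis
        using image G1.mem_generate_of_conj[OF f_twists \<open>y \<in> carrier ?G1\<close> \<open>?T \<in> ?gen\<close>] by simp
    next
      case False
      then show ?thesis using image by simp
    qed
  qed
qed

lemma conjz_CBr:
  assumes "c \<in> reach mut cG" "k \<in> c"
  shows "conjz mut arr cG (c, k) ` CBr mut arr cG c = CBr mut arr cG (mu mut c k)"
proof -
  let ?G1 = "pi1 mut arr cG (mu mut c k)" and ?f = "conjz mut arr cG (c, k)"
  interpret f: group_hom "pi1 mut arr cG c" ?G1 ?f
    using conjz_hom[OF assms] by (simp add: group_hom_def group_hom_axioms_def group_pi1)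
  have twists0: "twists mut arr cG c \<subseteq> carrier (pi1 mut arr cG c)"
    using assms(1) by (rule twists_subset_carrier)
  have twists1: "twists mut arr cG (mu mut c k) \<subseteq> carrier ?G1"
    using assms by (intro twists_subset_carrier reach.step)
  have "?f ` CBr mut arr cG c = generate ?G1 (?f ` twists mut arr cG c)"
    using f.generate_img[OF twists0] by (simp add: CBr_def twists_def)
  also have "\<dots> = generate ?G1 (twists mut arr cG (mu mut c k))"
    using twists0 twists1 conjz_twists_subset_generate[OF assms] twists_subset_generate_conjz[OF assms]
    by (intro f.H.generate_eq_generate) auto
  also have "\<dots> = CBr mut arr cG (mu mut c k)"
    by (simp add: CBr_def twists_def)
  finally show ?thesis .
qed
end

theorem mainTheorem2:
  fixes mut :: "'o set \<Rightarrow> 'o \<Rightarrow> 'o"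
    and arr :: "'o set \<Rightarrow> 'o \<Rightarrow> 'o \<Rightarrow> nat"
    and cG c0 :: "'o set" and k :: 'o
  assumes "cluster_data mut arr cG"
    and "c0 \<in> reach mut cG" and "k \<in> c0"
  defines "c1 \<equiv> mu mut c0 k"
    and "k' \<equiv> mut c0 k"
    and "\<sigma> \<equiv> (\<lambda>l. if l = k then mut c0 k else l)"
  shows "(\<forall>l \<in> c0.
            ceg_eq mut arr cG ([((c0, k), False)] @ twist mut c0 l @ [((c0, k), True)])
              (if arr c0 l k > 0
               then inv_word (twist mut c1 k') @ twist mut c1 (\<sigma> l) @ twist mut c1 k'
               else twist mut c1 (\<sigma> l)))
      \<and> conjz mut arr cG (c0, k) \<in> iso (pi1 mut arr cG c0) (pi1 mut arr cG c1)
      \<and> conjz mut arr cG (c0, k) ` CBr mut arr cG c0 = CBr mut arr cG c1"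
  unfolding c1_def k'_def \<sigma>_def
  using conj_twist[OF assms(1-3)] conjz_iso[OF assms(2,3)] conjz_CBr[OF assms(1-3)] by blast

end
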